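(* Let $\bm X=[\bm x_1,\dots,\bm x_p]\in\mathbb{R}^{n\times p}$ have full column rank and unit-norm columns, let $M\ge1$ be an integer with $n\ge p+M$, and fix $j\in[p]$. Let $\bm X_{\backslash j}$ be $\bm X$ with column $j$ removed, $\bm U_{\backslash j}\in\mathbb{R}^{n\times(p-1)}$ a matrix whose orthonormal columns span the column space of $\bm X_{\backslash j}$, and $\sigma_j^2=\|\bm x_j-\bm U_{\backslash j}\bm U_{\backslash j}^\top\bm x_j\|^2$. Suppose $s_j\in[0,\frac{M+1}{M}\sigma_j^2]$, and let $\bm e_M\in\mathbb{R}^M$ be the all-ones vector. Then the matrix $\bm A_j=s_j\bm I_M+s_j(1-s_j/\sigma_j^2)\bm e_M\bm e_M^\top$ is positive semidefinite. Moreover, let $\bm C\in\mathbb{R}^{M\times M}$ satisfy $\bm C^\top\bm C=\bm A_j$, let $\bm R\in\mathbb{R}^{n\times M}$ have orthonormal columns with $\bm X^\top\bm R=\bm 0$, and define $$\widetilde{\bm X}^{(j)}=[\widetilde{\bm x}_j^{(1)},\dots,\widetilde{\bm x}_j^{(M)}]=\Big[\frac{s_j}{\sigma_j^2}\bm U_{\backslash j}\bm U_{\backslash j}^\top\bm x_j+\Big(1-\frac{s_j}{\sigma_j^2}\Big)\bm x_j\Big]\bm e_M^\top+\bm R\bm C.$$ Then for each $m\in[M]$: (i) $\bm x_i^\top\widetilde{\bm x}_j^{(m)}=\bm x_i^\top\bm x_j$ for all $i\in[p]\setminus\{j\}$; (ii) $\bm x_j^\top\widetilde{\bm x}_j^{(m)}=1-s_j$;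 (iii) $(\widetilde{\bm x}_j^{(m)})^\top\widetilde{\bm x}_j^{(m)}=1$; (iv) $(\widetilde{\bm x}_j^{(m)})^\top\widetilde{\bm x}_j^{(\ell)}=1-s_j$ for all $\ell\in[M]\setminus\{m\}$. *)

theory Defs
  imports "Jordan_Normal_Form.DL_Rank"
begin

text \<open>Real matrices are Jordan_Normal_Form matrices with explicit dimensions
  (carrier_mat). Indices are 0-based: column j of X corresponds to x_(j+1).\<close>

definition full_col_rank :: "nat \<Rightarrow> nat \<Rightarrow> real mat \<Rightarrow> bool" where
  "full_col_rank n p X \<longleftrightarrow> X \<in> carrier_mat n p \<and> vec_space.rank n X = p"

definition del_col :: "real mat \<Rightarrow> nat \<Rightarrow> real mat" where
  "del_col X j = mat (dim_row X) (dim_col X - 1)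
      (\<lambda>(i, k). X $$ (i, if k < j then k else Suc k))"

definition orthonormal_cols :: "real mat \<Rightarrow> bool" where
  "orthonormal_cols U \<longleftrightarrow> transpose_mat U * U = 1\<^sub>m (dim_col U)"

definition sqnorm :: "real vec \<Rightarrow> real" where
  "sqnorm v = v \<bullet> v"

definition psd :: "real mat \<Rightarrow> bool" where
  "psd A \<longleftrightarrow> square_mat A \<and> transpose_mat A = A \<and>
     (\<forall>v \<in> carrier_vec (dim_row A). 0 \<le> v \<bullet> (A *\<^sub>v v))"

definition ones_vec :: "nat \<Rightarrow> real vec" where
  "ones_vec m = vec m (\<lambda>_. 1)"

definition outer :: "real vec \<Rightarrow> real vec \<Rightarrow> real mat" where
  "outer u v = mat (dim_vec u) (dim_vec v) (\<lambda>(i, k). u $ i * v $ k)"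

end

theory Submission
  imports Defs
begin

(* Write x = x_j and P = U U^T x for its orthogonal projection onto the span of the other
   columns, so that sigma^2 = 1 - |P|^2 and x_i . P = x_i . x for every i ~= j.  With
   a = s / sigma^2 and v = a P + (1 - a) x, the m-th knockoff column is v + R c_m, where c_m is
   the m-th column of C.  Since R is an isometry whose range is orthogonal to the columns of X,
   all inner products split as (v + R c_m) . (v + R c_l) = v . v + A_ml, and the four identities
   reduce to x . v = 1 - s and v . v = 1 - s - s (1 - a).  The matrix A = s I + s (1 - a) e e^T
   has eigenvalues s and s + M s (1 - a) = s (M + 1 - M a), and the upper bound on s says
   precisely that the second one is nonnegative. *)

lemma scalar_prod_mult_mat_vec:
  fixes A B :: "'a :: comm_ring_1 mat"
  assumes A: "A \<in> carrier_mat n k" and B: "B \<in> carrier_mat n l"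
    and a: "a \<in> carrier_vec k" and b: "b \<in> carrier_vec l"
  shows "(A *\<^sub>v a) \<bullet> (B *\<^sub>v b) = a \<bullet> ((transpose_mat A * B) *\<^sub>v b)"
proof -
  have "(A *\<^sub>v a) \<bullet> (B *\<^sub>v b) = (transpose_mat A *\<^sub>v (B *\<^sub>v b)) \<bullet> a"
    using transpose_vec_mult_scalar[OF A a, of "B *\<^sub>v b"] comm_scalar_prod[of "A *\<^sub>v a" n]
      A B a b by simp
  also have "\<dots> = a \<bullet> ((transpose_mat A * B) *\<^sub>v b)"
    using comm_scalar_prod[of _ k a] A B a b by simp
  finally show ?thesis .
qed

lemma orthonormal_cols_scalar_prod:
  assumes "U \<in> carrier_mat n k" and "orthonormal_cols U"
    and "c \<in> carrier_vec k" and "d \<in> carrier_vec k"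
  shows "(U *\<^sub>v c) \<bullet> (U *\<^sub>v d) = c \<bullet> d"
  using scalar_prod_mult_mat_vec[of U n k U] assms
  by (simp add: orthonormal_cols_def del: assoc_mult_mat_vec)

lemma col_space_orthogonal:
  fixes A B :: "real mat"
  assumes A: "A \<in> carrier_mat n k" and B: "B \<in> carrier_mat n l"
    and AB: "transpose_mat A * B = 0\<^sub>m k l"
    and u: "u \<in> vec_space.col_space n A" and w: "w \<in> vec_space.col_space n B"
  shows "u \<bullet> w = 0"
proof -
  obtain a b where "a \<in> carrier_vec k" "u = A *\<^sub>v a" "b \<in> carrier_vec l" "w = B *\<^sub>v b"
    using u w vec_space.col_space_eq[OF A] vec_space.col_space_eq[OF B] A B by auto
  moreover have "(0\<^sub>m k l :: real mat) *\<^sub>v b = 0\<^sub>v k" if "b \<in> carrier_vec l" for b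
    by (rule eq_vecI) (use that in auto)
  ultimately show ?thesis
    using scalar_prod_mult_mat_vec[OF A B] AB by (simp del: assoc_mult_mat_vec)
qed

lemma mult_mat_vec_in_col_space:
  fixes A :: "real mat"
  assumes "A \<in> carrier_mat n k" and "a \<in> carrier_vec k"
  shows "A *\<^sub>v a \<in> vec_space.col_space n A"
  using vec_space.col_space_eq[OF assms(1)] assms by auto

lemma set_cols_subset_col_space:
  fixes A :: "real mat"
  assumes "A \<in> carrier_mat n k"
  shows "set (cols A) \<subseteq> vec_space.col_space n A"
proof -
  interpret vec_space "TYPE(real)" n .
  show ?thesis
    unfolding col_space_def using span_mem cols_dim assms by blast
qed

lemma col_space_mono:
  fixes A B :: "real mat"
  assumes "set (cols A) \<subseteq> set (cols B)"
  shows "vec_space.col_space n A \<subseteq> vec_space.col_space n B"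
proof -
  interpret vec_space "TYPE(real)" n .
  show ?thesis
    unfolding col_space_def using assms by (rule span_is_monotone)
qed

lemma set_cols_del_col:
  assumes "j < dim_col X"
  shows "set (cols (del_col X j)) = col X ` ({0..<dim_col X} - {j})"
proof -
  define shift where "shift k = (if k < j then k else Suc k)" for k
  have shift_image: "shift ` {0..<dim_col X - 1} = {0..<dim_col X} - {j}"
  proof
    show "{0..<dim_col X} - {j} \<subseteq> shift ` {0..<dim_col X - 1}"
    proof
      fix i assume "i \<in> {0..<dim_col X} - {j}"
      then show "i \<in> shift ` {0..<dim_col X - 1}"
        using assms by (intro image_eqI[of _ _ "if i < j then i else i - 1"]) (auto simp: shift_def)
    qed
  qed (use assms in \<open>auto simp: shift_def\<close>)
  have "set (cols (del_col X j)) = col (del_col X j) ` {0..<dim_col X - 1}"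
    by (simp add: cols_def del_col_def)
  also have "\<dots> = col X ` shift ` {0..<dim_col X - 1}"
    unfolding image_image
    by (rule image_cong[OF refl], rule eq_vecI) (auto simp: del_col_def shift_def)
  finally show ?thesis unfolding shift_image .
qed

lemma scalar_prod_proj_col_space:
  fixes U :: "real mat"
  assumes U: "U \<in> carrier_mat n k" "orthonormal_cols U"
    and x: "x \<in> carrier_vec n" and u: "u \<in> vec_space.col_space n U"
  shows "u \<bullet> (U * transpose_mat U *\<^sub>v x) = u \<bullet> x"
proof -
  obtain w where w: "w \<in> carrier_vec k" "u = U *\<^sub>v w"
    using u vec_space.col_space_eq[OF U(1)] U by auto
  have "u \<bullet> (U * transpose_mat U *\<^sub>v x) = (U *\<^sub>v w) \<bullet> (U *\<^sub>v (transpose_mat U *\<^sub>v x))"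
    using U x w by simp
  also have "\<dots> = w \<bullet> (transpose_mat U *\<^sub>v x)"
    by (rule orthonormal_cols_scalar_prod) (use U x w in auto)
  also have "\<dots> = u \<bullet> x"
    using transpose_vec_mult_scalar[OF U(1) w(1) x] comm_scalar_prod[of w k] comm_scalar_prod[of x n]
      U x w by simp
  finally show ?thesis .
qed

lemma sqnorm_diff_orthogonal:
  fixes x y :: "real vec"
  assumes "x \<in> carrier_vec n" and "y \<in> carrier_vec n" and "y \<bullet> x = y \<bullet> y"
  shows "sqnorm (x - y) = sqnorm x - sqnorm y"
  using assms comm_scalar_prod[of x n y] unfolding sqnorm_def
  by (simp add: minus_scalar_prod_distrib[of _ n] scalar_prod_minus_distrib[of _ n])

lemma scalar_prod_ones_vec_sq_le:
  fixes w :: "real vec"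
  assumes "w \<in> carrier_vec M"
  shows "(ones_vec M \<bullet> w)\<^sup>2 \<le> real M * (w \<bullet> w)"
proof (cases "M = 0")
  case False
  define S where "S = ones_vec M \<bullet> w"
  have S: "S = (\<Sum>i<M. w $ i)" and Q: "w \<bullet> w = (\<Sum>i<M. (w $ i)\<^sup>2)"
    using assms by (auto simp: S_def ones_vec_def scalar_prod_def power2_eq_square atLeast0LessThan)
  have "0 \<le> (\<Sum>i<M. (real M * w $ i - S)\<^sup>2)"
    by (simp add: sum_nonneg)
  also have "\<dots> = real M * (real M * (w \<bullet> w) - S\<^sup>2)"
    unfolding Q S by (simp add: power2_diff sum.distrib sum_subtractf sum_distrib_left
        power_mult_distrib algebra_simps power2_eq_square)
  finally show ?thesis
    using False by (simp add: S_def zero_le_mult_iff)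
qed (use assms in \<open>simp add: ones_vec_def scalar_prod_def\<close>)

lemma outer_mult_mat_vec:
  assumes "w \<in> carrier_vec (dim_vec v)"
  shows "outer u v *\<^sub>v w = (v \<bullet> w) \<cdot>\<^sub>v u"
  by (rule eq_vecI) (use assms in \<open>auto simp: outer_def scalar_prod_def sum_distrib_left ac_simps\<close>)

lemma smult_mult_mat_vec:
  fixes A :: "'a :: comm_ring mat"
  assumes "A \<in> carrier_mat n k" and "v \<in> carrier_vec k"
  shows "(c \<cdot>\<^sub>m A) *\<^sub>v v = c \<cdot>\<^sub>v (A *\<^sub>v v)"
  by (rule eq_vecI) (use assms in \<open>auto simp: scalar_prod_def sum_distrib_left ac_simps\<close>)

lemma psd_scaled_identity_plus_ones:
  fixes s b :: real
  assumes s: "0 \<le> s" and sb: "0 \<le> s + real M * b"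
  shows "psd (s \<cdot>\<^sub>m 1\<^sub>m M + b \<cdot>\<^sub>m outer (ones_vec M) (ones_vec M))" (is "psd ?A")
proof -
  have e: "ones_vec M \<in> carrier_vec M" by (simp add: ones_vec_def)
  have J: "outer (ones_vec M) (ones_vec M) \<in> carrier_mat M M"
    by (simp add: ones_vec_def outer_def)
  then have A: "?A \<in> carrier_mat M M" by simp
  have "transpose_mat ?A = ?A"
    by (rule eq_matI) (auto simp: ones_vec_def outer_def)
  moreover have "0 \<le> w \<bullet> (?A *\<^sub>v w)" if w: "w \<in> carrier_vec M" for w
  proof -
    have "?A *\<^sub>v w = s \<cdot>\<^sub>v w + (b * (ones_vec M \<bullet> w)) \<cdot>\<^sub>v ones_vec M"
      using w e J by (simp add: add_mult_distrib_mat_vec[of _ M M] smult_mult_mat_vec[of _ M M]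
          outer_mult_mat_vec smult_smult_assoc)
    then have quad: "w \<bullet> (?A *\<^sub>v w) = s * (w \<bullet> w) + b * (ones_vec M \<bullet> w)\<^sup>2"
      using w e comm_scalar_prod[OF w e]
      by (simp add: scalar_prod_add_distrib[of _ M] power2_eq_square)
    have ww: "0 \<le> w \<bullet> w"
      unfolding scalar_prod_def by (simp add: sum_nonneg)
    show ?thesis
    proof (cases "b < 0")
      case True
      have "b * (real M * (w \<bullet> w)) \<le> b * (ones_vec M \<bullet> w)\<^sup>2"
        using scalar_prod_ones_vec_sq_le[OF w] True by (simp add: mult_left_mono_neg)
      then have "(s + real M * b) * (w \<bullet> w) \<le> w \<bullet> (?A *\<^sub>v w)"
        using quad by (simp add: algebra_simps)
      then show ?thesis
        using sb ww by (meson mult_nonneg_nonneg order_trans)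
    qed (use quad s ww in simp)
  qed
  ultimately show ?thesis
    using A J unfolding psd_def by auto
qed

lemma col_outer_ones_add_mult:
  fixes v :: "real vec"
  assumes "v \<in> carrier_vec n" and "R \<in> carrier_mat n M" and "C \<in> carrier_mat M M" and "m < M"
  shows "col (outer v (ones_vec M) + R * C) m = v + R *\<^sub>v col C m"
proof -
  have "outer v (ones_vec M) \<in> carrier_mat n M"
    using assms by (simp add: outer_def ones_vec_def)
  then have "col (outer v (ones_vec M) + R * C) m = col (outer v (ones_vec M)) m + col (R * C) m"
    using assms by (intro col_add) auto
  also have "col (outer v (ones_vec M)) m = v"
    by (rule eq_vecI) (use assms in \<open>auto simp: outer_def ones_vec_def\<close>)
  also have "col (R * C) m = R *\<^sub>v col C m"
    using assms by (intro col_mult2)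
  finally show ?thesis .
qed

lemma scalar_prod_add_isometry_orthogonal:
  fixes R :: "real mat"
  assumes R: "R \<in> carrier_mat n M" "orthonormal_cols R"
    and v: "v \<in> carrier_vec n" and v_perp: "\<And>c. c \<in> carrier_vec M \<Longrightarrow> v \<bullet> (R *\<^sub>v c) = 0"
    and c: "c \<in> carrier_vec M" and d: "d \<in> carrier_vec M"
  shows "(v + R *\<^sub>v c) \<bullet> (v + R *\<^sub>v d) = v \<bullet> v + c \<bullet> d"
proof -
  have "(R *\<^sub>v c) \<bullet> v = 0"
    using v_perp[OF c] comm_scalar_prod[of v n "R *\<^sub>v c"] R(1) v c by simp
  then show ?thesis
    using v_perp[OF d] orthonormal_cols_scalar_prod[OF R c d] R(1) v c d
    by (simp add: add_scalar_prod_distrib[of _ n] scalar_prod_add_distrib[of _ n])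
qed

lemma knockoff_scale_eigenvalue_nonneg:
  fixes s \<sigma>2 :: real
  assumes M: "M \<ge> 1" and s: "0 \<le> s" "s \<le> (real M + 1) / real M * \<sigma>2"
  shows "0 \<le> s + real M * (s * (1 - s / \<sigma>2))"
proof (cases "\<sigma>2 = 0")
  case False
  have "0 \<le> (real M + 1) / real M * \<sigma>2"
    using s by (rule order_trans)
  then have "0 < \<sigma>2"
    using M False by (auto simp: zero_le_divide_iff zero_le_mult_iff)
  moreover have "real M * s \<le> (real M + 1) * \<sigma>2"
    using s(2) M by (simp add: field_simps)
  ultimately have "real M * (s / \<sigma>2) \<le> real M + 1"
    by (simp add: pos_divide_le_eq)
  then have "0 \<le> s * (real M + 1 - real M * (s / \<sigma>2))"
    using s(1) by simp
  then show ?thesis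
    by (simp add: algebra_simps)
qed (use s in simp)

lemma proj_onto_other_columns:
  fixes X U :: "real mat" and j :: nat
  defines "x \<equiv> col X j"
  defines "P \<equiv> U * transpose_mat U *\<^sub>v x"
  assumes X: "X \<in> carrier_mat n p" and j: "j < p"
    and U: "U \<in> carrier_mat n (p - 1)" "orthonormal_cols U"
    and U_span: "vec_space.col_space n U = vec_space.col_space n (del_col X j)"
  shows "P \<in> vec_space.col_space n X"
    and "x \<bullet> P = P \<bullet> P"
    and "\<And>i. i < p \<Longrightarrow> i \<noteq> j \<Longrightarrow> col X i \<bullet> P = col X i \<bullet> x"
proof -
  have x: "x \<in> carrier_vec n" and P: "P \<in> carrier_vec n"
    using X U j by (auto simp: x_def P_def)
  have P_U: "P \<in> vec_space.col_space n U"
    using mult_mat_vec_in_col_space[OF U(1), of "transpose_mat U *\<^sub>v x"] U x by (simp add: P_def)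
  then show "P \<in> vec_space.col_space n X"
    using col_space_mono[of "del_col X j" X n] set_cols_del_col[of j X] X j U_span
    by (auto simp: cols_def)
  show "x \<bullet> P = P \<bullet> P"
    using scalar_prod_proj_col_space[OF U x P_U] comm_scalar_prod[OF x P] by (simp add: P_def)
  have "del_col X j \<in> carrier_mat n (p - 1)"
    using X by (simp add: del_col_def)
  then have "col X i \<in> vec_space.col_space n U" if "i < p" "i \<noteq> j" for i
    using set_cols_subset_col_space[of "del_col X j" n "p - 1"] set_cols_del_col[of j X] X j that U_span
    by auto
  then show "col X i \<bullet> P = col X i \<bullet> x" if "i < p" "i \<noteq> j" for i
    using scalar_prod_proj_col_space[OF U x] that by (simp add: P_def)
qed

lemma knockoff_inner_products:
  fixes X R C :: "real mat" and P :: "real vec" and a s :: real and j M :: nat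
  defines "x \<equiv> col X j" and "e \<equiv> ones_vec M"
  assumes X: "X \<in> carrier_mat n p" and j: "j < p" and unit: "x \<bullet> x = 1"
    and P: "P \<in> vec_space.col_space n X" and P_x: "x \<bullet> P = P \<bullet> P"
    and P_others: "\<And>i. i < p \<Longrightarrow> i \<noteq> j \<Longrightarrow> col X i \<bullet> P = col X i \<bullet> x"
    and s: "s = a * (1 - P \<bullet> P)"
    and R: "R \<in> carrier_mat n M" "orthonormal_cols R" "transpose_mat X * R = 0\<^sub>m p M"
    and C: "C \<in> carrier_mat M M"
      "transpose_mat C * C = s \<cdot>\<^sub>m 1\<^sub>m M + (s * (1 - a)) \<cdot>\<^sub>m outer e e"
    and m: "m < M"
  defines "xt \<equiv> col (outer (a \<cdot>\<^sub>v P + (1 - a) \<cdot>\<^sub>v x) e + R * C)"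
  shows "\<And>i. i < p \<Longrightarrow> i \<noteq> j \<Longrightarrow> col X i \<bullet> xt m = col X i \<bullet> x"
    and "x \<bullet> xt m = 1 - s"
    and "xt m \<bullet> xt m = 1"
    and "\<And>l. l < M \<Longrightarrow> l \<noteq> m \<Longrightarrow> xt m \<bullet> xt l = 1 - s"
proof -
  define v where "v = a \<cdot>\<^sub>v P + (1 - a) \<cdot>\<^sub>v x"
  note bilinear = add_scalar_prod_distrib[of _ n] scalar_prod_add_distrib[of _ n]
    smult_scalar_prod_distrib[of _ n] scalar_prod_smult_distrib[of _ n]
  have cols_X: "col X i \<in> vec_space.col_space n X" if "i < p" for i
    using set_cols_subset_col_space[OF X] X that by (auto simp: cols_def)
  have carrier: "x \<in> carrier_vec n" "P \<in> carrier_vec n" "v \<in> carrier_vec n"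
    "\<And>i. col X i \<in> carrier_vec n" "\<And>k. col C k \<in> carrier_vec M"
    using X C P vec_space.col_space_eq[OF X] by (auto simp: x_def v_def)
  have xt: "xt k = v + R *\<^sub>v col C k" if "k < M" for k
    unfolding xt_def v_def e_def
    using col_outer_ones_add_mult[OF carrier(3)[unfolded v_def] R(1) C(1) that] .
  have perp: "u \<bullet> (R *\<^sub>v c) = 0" if "u \<in> vec_space.col_space n X" "c \<in> carrier_vec M" for u c
    using col_space_orthogonal[OF X R(1) R(3) that(1) mult_mat_vec_in_col_space[OF R(1) that(2)]] .
  have v_perp: "v \<bullet> (R *\<^sub>v c) = 0" if "c \<in> carrier_vec M" for c
    using perp[OF P that] perp[OF cols_X[OF j] that] carrier R(1) that
    by (simp add: v_def x_def bilinear)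
  have x_v: "x \<bullet> v = 1 - s"
    using carrier unit P_x s by (simp add: v_def bilinear algebra_simps)
  have v_v: "v \<bullet> v = 1 - s - s * (1 - a)"
    using carrier unit P_x comm_scalar_prod[OF carrier(1,2)]
    by (simp add: v_def bilinear s algebra_simps)
  have gram: "xt m \<bullet> xt l = v \<bullet> v + (if m = l then s else 0) + s * (1 - a)" if "l < M" for l
  proof -
    have "col C m \<bullet> col C l = (transpose_mat C * C) $$ (m, l)"
      using C(1) that m by simp
    then have "col C m \<bullet> col C l = (if m = l then s else 0) + s * (1 - a)"
      using C(2) that m by (simp add: e_def ones_vec_def outer_def)
    then show ?thesis
      using scalar_prod_add_isometry_orthogonal[OF R(1,2) carrier(3) v_perp carrier(5) carrier(5)]
      by (simp add: xt[OF m] xt[OF that])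
  qed
  show "col X i \<bullet> xt m = col X i \<bullet> x" if "i < p" "i \<noteq> j" for i
    using carrier perp[OF cols_X[OF that(1)] carrier(5)] P_others[OF that] R(1)
    by (simp add: xt[OF m] v_def bilinear algebra_simps)
  show "x \<bullet> xt m = 1 - s"
    using carrier perp[OF cols_X[OF j] carrier(5)] x_v R(1) by (simp add: xt[OF m] x_def bilinear)
  show "xt m \<bullet> xt m = 1"
    using gram[OF m] v_v by simp
  show "xt m \<bullet> xt l = 1 - s" if "l < M" "l \<noteq> m" for l
    using gram[OF that(1)] v_v that by simp
qed

theorem lemma2p1:
  fixes n p M j :: nat and X U :: "real mat" and s :: real
  assumes X: "X \<in> carrier_mat n p" and rank: "full_col_rank n p X"
    and unit: "\<forall>i < p. sqnorm (col X i) = 1"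
    and M: "M \<ge> 1" and nM: "n \<ge> p + M"
    and j: "j < p"
    and U: "U \<in> carrier_mat n (p - 1)" and Uon: "orthonormal_cols U"
    and Uspan: "vec_space.col_space n U = vec_space.col_space n (del_col X j)"
    and s: "0 \<le> s"
      "s \<le> (real M + 1) / real M * sqnorm (col X j - U * transpose_mat U *\<^sub>v col X j)"
  shows
    "let \<sigma>2 = sqnorm (col X j - U * transpose_mat U *\<^sub>v col X j);
         e = ones_vec M;
         A = s \<cdot>\<^sub>m 1\<^sub>m M + (s * (1 - s / \<sigma>2)) \<cdot>\<^sub>m outer e e
     in psd A \<and>
        (\<forall>C R. C \<in> carrier_mat M M \<and> transpose_mat C * C = A \<and>
               R \<in> carrier_mat n M \<and> orthonormal_cols R \<and>
               transpose_mat X * R = 0\<^sub>m p M \<longrightarrow>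
          (let Xt = outer ((s / \<sigma>2) \<cdot>\<^sub>v (U * transpose_mat U *\<^sub>v col X j)
                            + (1 - s / \<sigma>2) \<cdot>\<^sub>v col X j) e + R * C
           in \<forall>m < M.
                (\<forall>i < p. i \<noteq> j \<longrightarrow> col X i \<bullet> col Xt m = col X i \<bullet> col X j) \<and>
                col X j \<bullet> col Xt m = 1 - s \<and>
                col Xt m \<bullet> col Xt m = 1 \<and>
                (\<forall>l < M. l \<noteq> m \<longrightarrow> col Xt m \<bullet> col Xt l = 1 - s)))"
proof -
  \<comment> \<open>\<open>rank\<close> and \<open>nM\<close> only guarantee that \<open>U\<close> and \<open>R\<close> exist; the identities do not need them\<close>
  define x where "x = col X j"
  define P where "P = U * transpose_mat U *\<^sub>v x"
  define \<sigma>2 where "\<sigma>2 = sqnorm (x - P)"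
  define a where "a = s / \<sigma>2"
  note proj = proj_onto_other_columns[OF X j U Uon Uspan, folded x_def, folded P_def]
  have unit_x: "x \<bullet> x = 1"
    using unit j by (simp add: x_def sqnorm_def)
  have \<sigma>2: "\<sigma>2 = 1 - P \<bullet> P"
    using sqnorm_diff_orthogonal[of x n P] proj(2) comm_scalar_prod[of x n P] unit_x X U j
    by (simp add: \<sigma>2_def sqnorm_def x_def P_def)
  have s_le: "s \<le> (real M + 1) / real M * \<sigma>2"
    using s(2) by (simp add: \<sigma>2_def P_def x_def)
  \<comment> \<open>if \<open>\<sigma>2 = 0\<close> then \<open>s = 0\<close>, so the junk value \<open>a = s / 0 = 0\<close> is harmless\<close>
  have s_a: "s = a * (1 - P \<bullet> P)"
    using s(1) s_le by (cases "\<sigma>2 = 0") (auto simp: a_def \<sigma>2[symmetric])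
  have "psd (s \<cdot>\<^sub>m 1\<^sub>m M + (s * (1 - a)) \<cdot>\<^sub>m outer (ones_vec M) (ones_vec M))"
    using psd_scaled_identity_plus_ones s(1) knockoff_scale_eigenvalue_nonneg[OF M s(1) s_le]
    by (simp add: a_def)
  then show ?thesis
    unfolding Let_def x_def[symmetric] P_def[symmetric] \<sigma>2_def[symmetric] a_def[symmetric]
    using knockoff_inner_products[OF X j unit_x[unfolded x_def] proj[unfolded x_def] s_a]
    by (auto simp: x_def)
qed

end
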